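(* Let $N\ge4$ be even. Then: (i) for every $k$ with $1\le k\le N/2-1$, $\mathrm{scale}_N[k]\cdot\mathrm{scale}_N[N/2-k]=\mathrm{GenScale}[N]$ (i.e. the list of scales equals the reversed list of $\mathrm{GenScale}[N]$ divided by the scales), and the $\mathbb{Q}$-span of the scales $\{\mathrm{scale}_N[k]:1\le k\le N/2-1\}$ has dimension at most $N/4$; (ii) if $N\equiv 2\pmod 4$, the dimension of that $\mathbb{Q}$-span is at most $\lfloor N/4\rfloor$, and the even-indexed and odd-indexed scales determine each other via $\mathrm{scale}_N[2m]=\mathrm{GenScale}[N]/\mathrm{scale}_N[N/2-2m]$ (with $N/2-2m$ odd); (iii) if $4\mid N$, then $\mathrm{scale}_N[N/4]=\sqrt{\mathrm{GenScale}[N]}$, and the scales with indices $k>N/4$ are obtained from those with $k<N/4$ as $\mathrm{GenScale}[N]/\mathrm{scale}_N[k]$; (iv) if $N\ge6$, then $\mathrm{ScaleSwap}[N,N/2]=\mathrm{scale}_N[2]$ and for every $k$ with $1\le k<N/4$, $\mathrm{scale}_{N/2}[k]=\mathrm{scale}_N[2k]/\mathrm{ScaleSwap}[N,N/2]$.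
   Context: For an integer $n\ge3$ and $1\le k<n/2$, $\mathrm{scale}_n[k]=\tan(\pi/n)/\tan(k\pi/n)$. $\langle n/2\rangle$ is the greatest integer strictly less than $n/2$ and $\mathrm{GenScale}[n]=\mathrm{scale}_n[\langle n/2\rangle]$ (so for $n$ even, $\mathrm{GenScale}[n]=\mathrm{scale}_n[n/2-1]$). $\mathrm{ScaleSwap}[n,m]=\tan(\pi/n)/\tan(\pi/m)$. *)

theory Defs
  imports Complex_Main
begin

definition scale :: "nat \<Rightarrow> nat \<Rightarrow> real" where
  "scale n k = tan (pi / real n) / tan (real k * pi / real n)"

text \<open>greatest integer strictly less than n/2 is (n-1) div 2 (for n \<ge> 1)\<close>
definition GenScale :: "nat \<Rightarrow> real" where
  "GenScale n = scale n ((n - 1) div 2)"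

definition ScaleSwap :: "nat \<Rightarrow> nat \<Rightarrow> real" where
  "ScaleSwap n m = tan (pi / real n) / tan (pi / real m)"

definition qscale :: "rat \<Rightarrow> real \<Rightarrow> real" where
  "qscale q x = real_of_rat q * x"

definition qdim :: "real set \<Rightarrow> nat" where
  "qdim S = Vector_Spaces.vector_space.dim qscale S"

end

theory Submission
  imports Defs
begin

text \<open>With \<open>\<theta> = \<pi>/N\<close> and \<open>c = cos 2\<theta>\<close>, the half-angle formula and the Chebyshev
recurrences for \<open>cos 2k\<theta>\<close> and \<open>sin 2k\<theta> / sin 2\<theta>\<close> express every scale \<open>tan \<theta> / tan k\<theta>\<close> as a
rational function of \<open>c\<close> with rational coefficients, so all scales lie in the field \<open>\<rat>(c)\<close>.
Writing \<open>N/2 = 2d + e\<close> with \<open>e \<in> {0,1}\<close>, the numbers \<open>cos((2j+e)\<theta>) / cos(e\<theta>)\<close> satisfy the same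
recurrence, start with \<open>1\<close> and vanish at \<open>j = d\<close>; hence their first \<open>d\<close> values span a
\<open>c\<close>-invariant space containing \<open>1\<close>, and \<open>[\<rat>(c):\<rat>] \<le> d = \<lfloor>N/4\<rfloor>\<close>. The remaining claims follow
from \<open>tan(\<pi>/2 - x) = cot x\<close>.\<close>

interpretation Q: vector_space qscale
  by unfold_locales (auto simp: qscale_def algebra_simps of_rat_add of_rat_mult)

lemma module_hom_mult: "module_hom qscale qscale (\<lambda>v. w * v)"
  by unfold_locales (auto simp: qscale_def algebra_simps)

lemma Q_subspace_mult_vimage: "Q.subspace S \<Longrightarrow> Q.subspace {v. w * v \<in> S}"
  using module_hom.subspace_vimage[OF module_hom_mult] by (simp add: vimage_def)

lemma inverse_mem_finite_dim_subspace:
  assumes W: "Q.subspace W" and fin: "finite G" and WG: "W \<subseteq> Q.span G"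
    and one: "1 \<in> W" and mult: "\<And>v. v \<in> W \<Longrightarrow> w * v \<in> W" and w: "w \<in> W"
  shows "inverse w \<in> W"
proof (cases "w = 0")
  case True
  then show ?thesis using W by (simp add: Q.subspace_0)
next
  case False
  obtain B where B: "B \<subseteq> W" "Q.independent B" "W \<subseteq> Q.span B"
    by (rule Q.maximal_independent_subset)
  have "B \<subseteq> Q.span G" using B(1) WG by blast
  then have finB: "finite B" using Q.independent_span_bound[OF fin B(2)] by blast
  have inj: "inj_on (\<lambda>v. w * v) X" for X using False by (auto simp: inj_on_def)
  define C where "C = (\<lambda>v. w * v) ` B"
  have indC: "Q.independent C"
    unfolding C_def by (rule module_hom.independent_injective_image[OF module_hom_mult B(2) inj])
  \<comment> \<open>\<open>w B\<close> is an independent subset of \<open>W\<close> as large as a basis, so it spans \<open>W \<ni> 1\<close>.\<close>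
  have "1 \<in> Q.span C"
  proof (rule ccontr)
    assume n: "1 \<notin> Q.span C"
    have "C \<subseteq> W" using B(1) mult unfolding C_def by blast
    then have "insert 1 C \<subseteq> Q.span B" using one B(3) by blast
    from Q.independent_span_bound[OF finB Q.independent_insertI[OF n indC] this]
    have "card (insert 1 C) \<le> card B" by blast
    moreover have "1 \<notin> C" using n Q.span_base by blast
    moreover have "card C = card B" unfolding C_def by (rule card_image[OF inj])
    ultimately show False using finB unfolding C_def by simp
  qed
  then have "1 \<in> (\<lambda>v. w * v) ` Q.span B"
    unfolding C_def using module_hom.span_image[OF module_hom_mult[of w], of B] by simp
  then obtain v where v: "v \<in> Q.span B" "1 = w * v" by auto
  have "v \<in> W" using v(1) Q.span_minimal[OF B(1) W] by auto
  moreover have "inverse w = v" using v(2) False by (simp add: field_simps)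
  ultimately show ?thesis by simp
qed

subsection \<open>The \<open>\<rat>\<close>-algebra generated by a real number\<close>

definition rat_alg :: "real \<Rightarrow> real set" where
  "rat_alg c = Q.span (range (\<lambda>j. c ^ j))"

lemma subspace_rat_alg: "Q.subspace (rat_alg c)"
  by (simp add: rat_alg_def)

lemma rat_alg_one: "1 \<in> rat_alg c"
  unfolding rat_alg_def by (rule Q.span_base) (metis power_0 rangeI)

lemma rat_alg_gen: "c \<in> rat_alg c"
  unfolding rat_alg_def by (rule Q.span_base) (metis power_one_right rangeI)

lemma rat_alg_add: "x \<in> rat_alg c \<Longrightarrow> y \<in> rat_alg c \<Longrightarrow> x + y \<in> rat_alg c"
  and rat_alg_diff: "x \<in> rat_alg c \<Longrightarrow> y \<in> rat_alg c \<Longrightarrow> x - y \<in> rat_alg c"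
  by (simp_all add: rat_alg_def Q.span_add Q.span_diff)

lemma rat_alg_mult:
  assumes x: "x \<in> rat_alg c" and y: "y \<in> rat_alg c"
  shows "x * y \<in> rat_alg c"
proof -
  have pow: "c ^ i * v \<in> rat_alg c" if "v \<in> rat_alg c" for i v
  proof -
    have "(\<lambda>v. c ^ i * v) ` range (\<lambda>j. c ^ j) \<subseteq> range (\<lambda>j. c ^ j)"
      by (auto simp flip: power_add)
    then have "(\<lambda>v. c ^ i * v) ` rat_alg c \<subseteq> rat_alg c"
      unfolding rat_alg_def module_hom.span_image[OF module_hom_mult, symmetric]
      by (simp add: Q.span_mono)
    then show ?thesis using that by blast
  qed
  have "range (\<lambda>j. c ^ j) \<subseteq> {v. v * x \<in> rat_alg c}"
    using pow[OF x] by auto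
  from Q.span_minimal[OF this] show ?thesis
    using y Q_subspace_mult_vimage[OF subspace_rat_alg, of x]
    by (auto simp: rat_alg_def mult.commute)
qed

lemma rat_alg_subset:
  assumes S: "Q.subspace S" and one: "1 \<in> S" and mult: "\<And>v. v \<in> S \<Longrightarrow> c * v \<in> S"
  shows "rat_alg c \<subseteq> S"
proof -
  have "c ^ j \<in> S" for j by (induction j) (simp_all add: one mult)
  then show ?thesis unfolding rat_alg_def using Q.span_minimal[OF _ S] by blast
qed

lemma rat_alg_inverse:
  assumes "finite G" "rat_alg c \<subseteq> Q.span G" "x \<in> rat_alg c"
  shows "inverse x \<in> rat_alg c"
  using inverse_mem_finite_dim_subspace[OF subspace_rat_alg assms(1,2) rat_alg_one rat_alg_mult]
    assms(3) by blast

lemma chebyshev_seq_mem_rat_alg: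
  fixes a :: "nat \<Rightarrow> real"
  assumes rec: "\<And>k. a (k + 2) = 2 * c * a (k + 1) - a k"
    and a0: "a 0 \<in> rat_alg c" and a1: "a 1 \<in> rat_alg c"
  shows "a k \<in> rat_alg c"
proof -
  have two_c: "2 * c \<in> rat_alg c" using rat_alg_add[OF rat_alg_gen rat_alg_gen] by simp
  have "a k \<in> rat_alg c \<and> a (k + 1) \<in> rat_alg c"
  proof (induction k)
    case 0
    then show ?case using a0 a1 by simp
  next
    case (Suc k)
    then have "a (k + 2) \<in> rat_alg c"
      unfolding rec by (auto intro: rat_alg_diff rat_alg_mult[OF two_c])
    with Suc show ?case by simp
  qed
  then show ?thesis ..
qed

lemma rat_alg_subset_span_chebyshev:
  fixes a :: "nat \<Rightarrow> real"
  assumes rec: "\<And>k. a (k + 2) = 2 * c * a (k + 1) - a k"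
    and a0: "a 0 = 1" and ad: "a d = 0" and c: "c \<in> Q.span (a ` {..<d})"
  shows "rat_alg c \<subseteq> Q.span (a ` {..<d})"
proof (rule rat_alg_subset)
  let ?S = "Q.span (a ` {..<d})"
  have a_mem: "a j \<in> ?S" if "j \<le> d" for j
    using that ad by (cases "j = d") (auto intro: Q.span_base simp: Q.span_zero)
  show "1 \<in> ?S" using a_mem[of 0] a0 by simp
  have "c * a j \<in> ?S" if "j < d" for j
  proof (cases j)
    case 0
    then show ?thesis using a0 c by simp
  next
    case (Suc i)
    have "c * a j = qscale (1/2) (a (i + 2) + a i)"
      using rec[of i] Suc by (simp add: qscale_def of_rat_divide)
    then show ?thesis using a_mem Suc that by (simp add: Q.span_scale Q.span_add)
  qed
  then have "a ` {..<d} \<subseteq> {v. c * v \<in> ?S}" by auto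
  from Q.span_minimal[OF this Q_subspace_mult_vimage] show "c * v \<in> ?S" if "v \<in> ?S" for v
    using that by auto
qed simp

lemma cos_progression_rec:
  "cos (x + real (k + 2) * y) = 2 * cos y * cos (x + real (k + 1) * y) - cos (x + real k * y)"
proof -
  have "2 * cos y * cos (x + real (k + 1) * y) = cos (x + real k * y) + cos (x + real (k + 2) * y)"
    using cos_times_cos[of "x + real (k + 1) * y" y] by (simp add: algebra_simps)
  then show ?thesis by simp
qed

lemma sin_progression_rec:
  "sin (x + real (k + 2) * y) = 2 * cos y * sin (x + real (k + 1) * y) - sin (x + real k * y)"
proof -
  have "2 * cos y * sin (x + real (k + 1) * y) = sin (x + real (k + 2) * y) + sin (x + real k * y)"
    using sin_times_cos[of "x + real (k + 1) * y" y] by (simp add: algebra_simps)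
  then show ?thesis by simp
qed

lemma tan_ratio_mem_rat_alg:
  assumes fin: "finite G" and G: "rat_alg (cos (2 * t)) \<subseteq> Q.span G"
  shows "tan t / tan (real k * t) \<in> rat_alg (cos (2 * t))"
proof -
  let ?c = "cos (2 * t)"
  define C where "C j = cos (real j * (2 * t))" for j
  define U where "U j = sin (real j * (2 * t)) / sin (2 * t)" for j
  have C: "C j \<in> rat_alg ?c" for j
    by (rule chebyshev_seq_mem_rat_alg)
      (use cos_progression_rec[of 0 _ "2 * t"] in \<open>simp_all add: C_def rat_alg_one rat_alg_gen\<close>)
  have U: "U j \<in> rat_alg ?c" for j
    by (rule chebyshev_seq_mem_rat_alg)
      (use sin_progression_rec[of 0 _ "2 * t"] in \<open>simp_all add: U_def diff_divide_distrib
        rat_alg_one Q.subspace_0[OF subspace_rat_alg]\<close>)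
  \<comment> \<open>half-angle formula; it also holds when \<open>sin 2t = 0\<close>, where both sides vanish\<close>
  have "tan (real j * t) = sin (real j * (2 * t)) * inverse (C j + 1)" for j
    using tan_half[of "real j * t"] by (simp add: C_def divide_inverse mult.left_commute)
  from this[of 1] this[of k]
  have "tan t / tan (real k * t) = (C k + 1) * inverse (C 1 + 1) * inverse (U k)"
    by (simp add: U_def divide_inverse inverse_mult_distrib mult_ac)
  moreover have "C k + 1 \<in> rat_alg ?c" "C 1 + 1 \<in> rat_alg ?c"
    using C rat_alg_add rat_alg_one by auto
  ultimately show ?thesis
    using rat_alg_inverse[OF fin G] U rat_alg_mult by simp
qed

lemma rat_alg_cos_subset_span:
  assumes N: "even N" "4 \<le> N"
  obtains G where "finite G" "card G \<le> N div 4" "rat_alg (cos (2 * (pi / real N))) \<subseteq> Q.span G"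
proof -
  define \<theta> where "\<theta> = pi / real N"
  define d where "d = N div 4"
  define e where "e = N div 2 mod 2"
  let ?c = "cos (2 * \<theta>)"
  have e: "e = 0 \<or> e = 1" unfolding e_def by auto
  have d: "1 \<le> d" using N unfolding d_def by auto
  have "N = 2 * (2 * d + e)"
    using N unfolding d_def e_def by presburger
  then have RN: "real N = 2 * (2 * real d + real e)" by simp
  have "real e * \<theta> + real d * (2 * \<theta>) = (2 * real d + real e) * \<theta>"
    by (simp add: algebra_simps)
  also have "\<dots> = pi / 2"
    unfolding \<theta>_def RN using d by (simp add: field_simps)
  finally have quarter: "real e * \<theta> + real d * (2 * \<theta>) = pi / 2" .
  have "0 < \<theta>" "\<theta> < pi / 2" unfolding \<theta>_def using N by (auto simp: field_simps)
  then have cos_e: "0 < cos (real e * \<theta>)" using e by (auto intro: cos_gt_zero)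
  define a where "a j = cos (real e * \<theta> + real j * (2 * \<theta>)) / cos (real e * \<theta>)" for j
  have rec: "a (k + 2) = 2 * ?c * a (k + 1) - a k" for k
    unfolding a_def cos_progression_rec by (simp add: diff_divide_distrib)
  have a0: "a 0 = 1" using cos_e by (simp add: a_def)
  have ad: "a d = 0" unfolding a_def quarter by simp
  have a_mem: "a j \<in> Q.span (a ` {..<d})" if "j \<le> d" for j
    using that ad by (cases "j = d") (auto intro: Q.span_base simp: Q.span_zero)
  have "?c \<in> Q.span (a ` {..<d})"
  proof (cases "e = 0")
    case True
    then have "?c = a 1" by (simp add: a_def)
    then show ?thesis using a_mem d by simp
  next
    case False
    then have "e = 1" using e by simp
    then have "?c = qscale (1/2) (a 1 + a 0)"
      using cos_times_cos[of "2 * \<theta>" \<theta>] cos_e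
      by (simp add: a_def qscale_def of_rat_divide field_simps)
    then show ?thesis using a_mem d by (simp add: Q.span_scale Q.span_add)
  qed
  then have "rat_alg ?c \<subseteq> Q.span (a ` {..<d})"
    by (rule rat_alg_subset_span_chebyshev[OF rec a0 ad])
  moreover have "card (a ` {..<d}) \<le> N div 4"
    using card_image_le[of "{..<d}" a] by (simp add: d_def)
  ultimately show thesis by (intro that) (simp_all add: \<theta>_def)
qed

lemma qdim_scales_le:
  assumes "even N" "4 \<le> N"
  shows "qdim {scale N k | k. P k} \<le> N div 4"
proof -
  obtain G where G: "finite G" "card G \<le> N div 4"
    and alg: "rat_alg (cos (2 * (pi / real N))) \<subseteq> Q.span G"
    using rat_alg_cos_subset_span[OF assms] .
  have "scale N k = tan (pi / real N) / tan (real k * (pi / real N))" for k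
    by (simp add: scale_def)
  then have "{scale N k | k. P k} \<subseteq> Q.span G"
    using tan_ratio_mem_rat_alg[OF G(1) alg] alg by auto
  from Q.dim_le_card[OF this G(1)] show ?thesis
    using G(2) by (simp add: qdim_def)
qed

lemma tan_pi_div_pos: "2 < N \<Longrightarrow> 0 < tan (pi / real N)"
  by (intro tan_gt_zero) (auto simp: field_simps)

lemma scale_pos:
  assumes "0 < k" "2 * k < N"
  shows "0 < scale N k"
proof -
  have "real k * pi / real N < pi / 2" using assms by (simp add: field_simps)
  then show ?thesis unfolding scale_def using assms
    by (intro divide_pos_pos tan_pi_div_pos tan_gt_zero) auto
qed

lemma scale_mult_scale_complement:
  assumes "even N" "0 < k" "2 * k < N"
  shows "scale N k * scale N (N div 2 - k) = tan (pi / real N) ^ 2"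
proof -
  have "k \<le> N div 2" "real (N div 2) = real N / 2"
    using assms by (auto simp: real_of_nat_div)
  then have "real (N div 2 - k) * pi / real N = pi / 2 - real k * pi / real N"
    using assms by (simp add: of_nat_diff field_simps)
  then have "tan (real (N div 2 - k) * pi / real N) = inverse (tan (real k * pi / real N))"
    by (simp add: tan_cot)
  then have "scale N (N div 2 - k) = tan (pi / real N) * tan (real k * pi / real N)"
    by (simp add: scale_def divide_inverse)
  moreover have "0 < tan (real k * pi / real N)"
    using assms by (intro tan_gt_zero) (auto simp: field_simps)
  ultimately show ?thesis by (simp add: scale_def power2_eq_square)
qed

lemma GenScale_eq:
  assumes "even N" "4 \<le> N"
  shows "GenScale N = tan (pi / real N) ^ 2"
proof -
  have "scale N 1 = 1" using tan_pi_div_pos[of N] assms by (simp add: scale_def)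
  moreover have "(N - 1) div 2 = N div 2 - 1" using assms by (auto elim!: evenE)
  moreover have "N div 2 - (N div 2 - 1) = 1" using assms by auto
  ultimately show ?thesis
    using scale_mult_scale_complement[of N "N div 2 - 1"] assms by (simp add: GenScale_def)
qed

lemma scale_eq_GenScale_div:
  assumes "even N" "4 \<le> N" "0 < k" "2 * k < N"
  shows "scale N k = GenScale N / scale N (N div 2 - k)"
proof -
  have "0 < scale N (N div 2 - k)" using assms by (intro scale_pos) auto
  then show ?thesis
    using scale_mult_scale_complement[of N k] assms by (simp add: GenScale_eq field_simps)
qed

lemma scale_quarter:
  assumes "4 dvd N" "0 < N"
  shows "scale N (N div 4) = sqrt (GenScale N)"
proof -
  have N: "even N" "4 \<le> N" "0 < N div 4" "2 * (N div 4) < N" "N div 2 - N div 4 = N div 4"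
    using assms by (auto simp: dvd_def)
  then have "scale N (N div 4) ^ 2 = GenScale N"
    using scale_mult_scale_complement[of N "N div 4"] GenScale_eq by (simp add: power2_eq_square)
  then show ?thesis using scale_pos[of "N div 4" N] N by (auto intro: real_sqrt_unique[symmetric])
qed

lemma ScaleSwap_half:
  assumes "even N"
  shows "ScaleSwap N (N div 2) = scale N 2"
  using assms by (auto simp: ScaleSwap_def scale_def elim!: evenE)

lemma scale_half:
  assumes "even N" "4 \<le> N"
  shows "scale (N div 2) k = scale N (2 * k) / ScaleSwap N (N div 2)"
  using assms tan_pi_div_pos[of N] by (auto simp: ScaleSwap_def scale_def elim!: evenE)

theorem lemma5:
  fixes N :: nat
  assumes "N \<ge> 4" and "even N"
  shows
   "(\<forall>k. 1 \<le> k \<and> k \<le> N div 2 - 1 \<longrightarrow> scale N k * scale N (N div 2 - k) = GenScale N)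
    \<and> real (qdim {scale N k | k. 1 \<le> k \<and> k \<le> N div 2 - 1}) \<le> real N / 4
    \<and> (N mod 4 = 2 \<longrightarrow>
         qdim {scale N k | k. 1 \<le> k \<and> k \<le> N div 2 - 1} \<le> nat \<lfloor>real N / 4\<rfloor>
         \<and> (\<forall>m. 1 \<le> 2 * m \<and> 2 * m \<le> N div 2 - 1 \<longrightarrow>
               scale N (2 * m) = GenScale N / scale N (N div 2 - 2 * m) \<and> odd (N div 2 - 2 * m)))
    \<and> (4 dvd N \<longrightarrow>
         scale N (N div 4) = sqrt (GenScale N)
         \<and> (\<forall>k. N div 4 < k \<and> k \<le> N div 2 - 1 \<longrightarrow> scale N k = GenScale N / scale N (N div 2 - k)))
    \<and> (N \<ge> 6 \<longrightarrow>
         ScaleSwap N (N div 2) = scale N 2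
         \<and> (\<forall>k. 1 \<le> k \<and> real k < real N / 4 \<longrightarrow>
               scale (N div 2) k = scale N (2 * k) / ScaleSwap N (N div 2)))"
proof -
  have N: "even N" "4 \<le> N" using assms by auto
  have dim: "qdim {scale N k | k. 1 \<le> k \<and> k \<le> N div 2 - 1} \<le> N div 4"
    by (rule qdim_scales_le[OF N])
  have floor: "\<lfloor>real N / 4\<rfloor> = int (N div 4)"
    using floor_divide_of_nat_eq[of N 4] by simp
  then have "real (N div 4) \<le> real N / 4"
    by (metis of_int_floor_le of_int_of_nat_eq)
  have complement: "scale N k = GenScale N / scale N (N div 2 - k)"
    if "1 \<le> k" "k \<le> N div 2 - 1" for k
    using that N by (intro scale_eq_GenScale_div) auto
  show ?thesis
  proof (intro conjI allI impI)
    fix k assume "1 \<le> k \<and> k \<le> N div 2 - 1"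
    then show "scale N k * scale N (N div 2 - k) = GenScale N"
      using scale_mult_scale_complement[of N k] N by (auto simp: GenScale_eq)
  next
    show "real (qdim {scale N k | k. 1 \<le> k \<and> k \<le> N div 2 - 1}) \<le> real N / 4"
      using dim \<open>real (N div 4) \<le> real N / 4\<close> by linarith
  next
    show "qdim {scale N k | k. 1 \<le> k \<and> k \<le> N div 2 - 1} \<le> nat \<lfloor>real N / 4\<rfloor>"
      using dim floor by simp
  next
    fix m assume "1 \<le> 2 * m \<and> 2 * m \<le> N div 2 - 1"
    then show "scale N (2 * m) = GenScale N / scale N (N div 2 - 2 * m)"
      using complement by blast
  next
    fix m assume "N mod 4 = 2" "1 \<le> 2 * m \<and> 2 * m \<le> N div 2 - 1"
    then show "odd (N div 2 - 2 * m)" by presburger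
  next
    assume "4 dvd N"
    then show "scale N (N div 4) = sqrt (GenScale N)" using N by (intro scale_quarter) auto
  next
    fix k assume "4 dvd N" "N div 4 < k \<and> k \<le> N div 2 - 1"
    then show "scale N k = GenScale N / scale N (N div 2 - k)" using complement by auto
  next
    show "ScaleSwap N (N div 2) = scale N 2" using N(1) by (rule ScaleSwap_half)
  next
    fix k show "scale (N div 2) k = scale N (2 * k) / ScaleSwap N (N div 2)"
      using N by (rule scale_half)
  qed
qed

end
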